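(* Let $k\ge 2$ be a fixed integer and let $c_2,\dots,c_k$ be constants with $0<c_i<\frac{1}{16k^2}\binom{k-1}{i-1}10^{-3\frac{k-i}{k-1}}$. There exist $T_0(k)$ and $N_0(k,T)$ such that for all $T\ge T_0(k)$, $N\ge N_0(k,T)$, and $s=0.001\ln T$, the following holds. Let $\mathcal H=(V,\mathcal E_2\cup\dots\cup\mathcal E_k)$ be a hypergraph on $N$ vertices with average degrees $t_i^{i-1}:=i|\mathcal E_i|/N$ satisfying $t_i^{i-1}\le c_iT^{i-1}(\ln T)^{\frac{k-i}{k-1}}$ for $i=2,\dots,k$. Then there is a set $V^*\subseteq V$ with $|V^*|=n$ such that the induced subhypergraph $\mathcal H^*=\mathcal H[V^*]$ satisfies (a) $\frac34\frac{N}{e^s}\le n\le\frac{N}{e^s}$, and (b) for every $v\in V^*$ and every $i=2,\dots,k$, the number $d_i^*(v)$ of $i$-element edges of $\mathcal H^*$ containing $v$ satisfies $$d_i^*(v)\le\binom{k-1}{i-1}s^{\frac{k-i}{k-1}}\Big(\frac{T}{e^s}\Big)^{i-1}.$$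
   Context: $\mathcal E_i$ denotes the set of edges of size $i$ of a hypergraph; $\mathcal H[V^*]$ is the subhypergraph induced on $V^*$ (all edges contained in $V^*$). *)

theory Defs
  imports Complex_Main
begin

definition hypergraph_2k :: "nat \<Rightarrow> 'a set \<Rightarrow> 'a set set \<Rightarrow> bool" where
  "hypergraph_2k k V E \<longleftrightarrow> finite V \<and> (\<forall>e\<in>E. e \<subseteq> V \<and> 2 \<le> card e \<and> card e \<le> k)"

definition edges_of_size :: "'a set set \<Rightarrow> nat \<Rightarrow> 'a set set" where
  "edges_of_size E i = {e \<in> E. card e = i}"

definition induced_edges :: "'a set set \<Rightarrow> 'a set \<Rightarrow> 'a set set" where
  "induced_edges E W = {e \<in> E. e \<subseteq> W}"

definition degree_i :: "'a set set \<Rightarrow> nat \<Rightarrow> 'a \<Rightarrow> nat" where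
  "degree_i E i v = card {e \<in> edges_of_size E i. v \<in> e}"

end

theory Submission imports Defs begin

text \<open>Weight every edge e of size j inside W by \<open>\<phi> j / |W|^j\<close>. Deleting a suitable vertex never
  increases the total weight: averaged over all vertices, an edge survives with probability
  \<open>(w - j)/w\<close>, which Bernoulli's inequality bounds by \<open>((w - 1)/w)^j\<close>. Deleting greedily
  from V down to \<open>m \<approx> N/e^s\<close> vertices, with \<open>\<phi> j = j m^j / B j\<close> for the target degree bounds
  \<open>B j\<close>, gives a set W whose weight \<open>\<Sum>e. |e| / B |e|\<close> is at most the initial weight, which the
  average degree hypotheses bound by \<open>N/(32 e^s)\<close>. By double counting, that weight also bounds
  the number of vertices of W that violate some degree bound; removing them keeps 3/4 of W.\<close>

lemma diff_mult_power_le_mult_pred_power: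
  fixes w :: real and j :: nat
  assumes "w \<ge> 2" "real j \<le> w"
  shows "(w - real j) * w ^ j \<le> w * (w - 1) ^ j"
proof -
  have "1 + real j * (-1/w) \<le> (1 + (-1/w)) ^ j"
    by (rule Bernoulli_inequality) (use assms in \<open>simp add: field_simps\<close>)
  hence "(1 - real j / w) * w ^ j \<le> ((w - 1)/w) ^ j * w ^ j"
    using assms by (intro mult_right_mono) (auto simp: field_simps)
  also have "\<dots> = (w - 1) ^ j"
    using assms by (simp add: power_divide)
  finally have "w * ((1 - real j / w) * w ^ j) \<le> w * (w - 1) ^ j"
    using assms by (intro mult_left_mono) auto
  moreover have "w * ((1 - real j / w) * w ^ j) = (w - real j) * w ^ j"
    using assms by (simp add: field_simps)
  ultimately show ?thesis by simp
qed

lemma sum_card_mult_eq_sum_incident: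
  fixes f :: "'a set \<Rightarrow> real"
  assumes "finite W" "finite F" "\<forall>e\<in>F. e \<subseteq> W"
  shows "(\<Sum>e\<in>F. real (card e) * f e) = (\<Sum>v\<in>W. \<Sum>e\<in>{e\<in>F. v \<in> e}. f e)"
proof -
  have "(\<Sum>e\<in>F. real (card e) * f e) = (\<Sum>e\<in>F. \<Sum>v\<in>W. if v \<in> e then f e else 0)"
  proof (rule sum.cong[OF refl])
    fix e assume "e \<in> F"
    hence "{v\<in>W. v \<in> e} = e" using assms(3) by auto
    thus "real (card e) * f e = (\<Sum>v\<in>W. if v \<in> e then f e else 0)"
      by (simp add: sum.inter_filter[OF assms(1), symmetric])
  qed
  also have "\<dots> = (\<Sum>v\<in>W. \<Sum>e\<in>F. if v \<in> e then f e else 0)"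
    by (rule sum.swap)
  also have "\<dots> = (\<Sum>v\<in>W. \<Sum>e\<in>{e\<in>F. v \<in> e}. f e)"
    by (simp add: sum.inter_filter[OF assms(2)])
  finally show ?thesis .
qed

definition edge_potential :: "(nat \<Rightarrow> real) \<Rightarrow> 'a set set \<Rightarrow> 'a set \<Rightarrow> real" where
  "edge_potential \<phi> E W = (\<Sum>e\<in>induced_edges E W. \<phi> (card e) / real (card W) ^ card e)"

lemma finite_induced_edges: "finite W \<Longrightarrow> finite (induced_edges E W)"
  unfolding induced_edges_def by (rule finite_subset[of _ "Pow W"]) auto

lemma sum_edge_potential_delete:
  assumes "finite W" "card W \<ge> 1"
  shows "(\<Sum>x\<in>W. edge_potential \<phi> E (W - {x}))
    = (\<Sum>e\<in>induced_edges E W. (real (card W) - real (card e)) * (\<phi> (card e) / real (card W - 1) ^ card e))"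
proof -
  define F where "F = induced_edges E W"
  define f where "f e = \<phi> (card e) / real (card W - 1) ^ card e" for e :: "'a set"
  have F: "finite F" "\<forall>e\<in>F. e \<subseteq> W"
    unfolding F_def using finite_induced_edges[OF assms(1)] by (auto simp: induced_edges_def)
  have "edge_potential \<phi> E (W - {x}) = (\<Sum>e\<in>F. f e) - (\<Sum>e\<in>{e\<in>F. x \<in> e}. f e)" if "x \<in> W" for x
  proof -
    have "induced_edges E (W - {x}) = F - {e\<in>F. x \<in> e}"
      unfolding F_def induced_edges_def by auto
    thus ?thesis
      using that assms F by (simp add: edge_potential_def f_def sum_diff)
  qed
  hence "(\<Sum>x\<in>W. edge_potential \<phi> E (W - {x}))
      = real (card W) * (\<Sum>e\<in>F. f e) - (\<Sum>x\<in>W. \<Sum>e\<in>{e\<in>F. x \<in> e}. f e)"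
    by (simp add: sum_subtractf)
  also have "\<dots> = (\<Sum>e\<in>F. (real (card W) - real (card e)) * f e)"
    by (simp add: sum_card_mult_eq_sum_incident[OF assms(1) F, symmetric] sum_distrib_left
        left_diff_distrib sum_subtractf)
  finally show ?thesis
    unfolding F_def f_def .
qed

lemma edge_potential_delete_le:
  assumes W: "finite W" "card W \<ge> 2" and \<phi>: "\<forall>e\<in>E. \<phi> (card e) \<ge> 0"
  shows "\<exists>x\<in>W. edge_potential \<phi> E (W - {x}) \<le> edge_potential \<phi> E W"
proof (rule ccontr)
  assume "\<not> ?thesis"
  hence "(\<Sum>x\<in>W. edge_potential \<phi> E W) < (\<Sum>x\<in>W. edge_potential \<phi> E (W - {x}))"
    using W by (intro sum_strict_mono) auto
  also have "\<dots> \<le> (\<Sum>e\<in>induced_edges E W. real (card W) * (\<phi> (card e) / real (card W) ^ card e))"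
    unfolding sum_edge_potential_delete[OF W(1) order.trans[OF _ W(2)], OF one_le_numeral]
  proof (rule sum_mono)
    fix e assume e: "e \<in> induced_edges E W"
    define w where "w = real (card W)"
    have w: "w \<ge> 2" "real (card e) \<le> w" "real (card W - 1) = w - 1"
      using W e card_mono[OF W(1)] unfolding w_def induced_edges_def by (auto simp: of_nat_diff)
    have "(w - real (card e)) / (w - 1) ^ card e \<le> w / w ^ card e"
      using diff_mult_power_le_mult_pred_power[OF w(1,2)] w by (simp add: divide_simps)
    hence "(w - real (card e)) / (w - 1) ^ card e * \<phi> (card e) \<le> w / w ^ card e * \<phi> (card e)"
      using \<phi> e unfolding induced_edges_def by (intro mult_right_mono) auto
    thus "(real (card W) - real (card e)) * (\<phi> (card e) / real (card W - 1) ^ card e)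
        \<le> real (card W) * (\<phi> (card e) / real (card W) ^ card e)"
      unfolding w(3) unfolding w_def by simp
  qed
  also have "\<dots> = (\<Sum>x\<in>W. edge_potential \<phi> E W)"
    by (simp add: edge_potential_def sum_distrib_left)
  finally show False by simp
qed

lemma edge_potential_subset_le:
  assumes "finite W" "1 \<le> m" "m \<le> card W" and \<phi>: "\<forall>e\<in>E. \<phi> (card e) \<ge> 0"
  shows "\<exists>W'\<subseteq>W. card W' = m \<and> edge_potential \<phi> E W' \<le> edge_potential \<phi> E W"
  using assms(1,3)
proof (induction "card W - m" arbitrary: W)
  case 0
  thus ?case by auto
next
  case (Suc d)
  have "card W \<ge> 2"
    using Suc.hyps(2) assms(2) by linarith
  then obtain x where x: "x \<in> W" "edge_potential \<phi> E (W - {x}) \<le> edge_potential \<phi> E W"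
    using edge_potential_delete_le[OF Suc.prems(1) _ \<phi>] by blast
  have "d = card (W - {x}) - m" "finite (W - {x})" "m \<le> card (W - {x})"
    using Suc x by auto
  then obtain W' where "W' \<subseteq> W - {x}" "card W' = m"
      "edge_potential \<phi> E W' \<le> edge_potential \<phi> E (W - {x})"
    using Suc.hyps(1) by blast
  thus ?case
    using x by (intro exI[of _ W']) auto
qed

lemma card_high_degree_le_sum:
  assumes "finite W" "finite F" "\<forall>e\<in>F. e \<subseteq> W" and B: "\<forall>i\<in>I. B i > 0" "\<forall>e\<in>F. B (card e) \<ge> 0"
  shows "real (card {v\<in>W. \<exists>i\<in>I. B i < real (degree_i F i v)}) \<le> (\<Sum>e\<in>F. real (card e) / B (card e))"
proof -
  define g where "g v = (\<Sum>e\<in>{e\<in>F. v \<in> e}. 1 / B (card e))" for v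
  have g_nonneg: "g v \<ge> 0" for v
    unfolding g_def using B(2) by (intro sum_nonneg) auto
  define High where "High = {v\<in>W. \<exists>i\<in>I. B i < real (degree_i F i v)}"
  have "1 \<le> g v" if high: "v \<in> High" for v
  proof -
    obtain i where i: "i \<in> I" "B i < real (degree_i F i v)"
      using high unfolding High_def by blast
    have "1 < real (degree_i F i v) / B i"
      using i B(1) by simp
    also have "\<dots> = (\<Sum>e\<in>{e\<in>F. v \<in> e \<and> card e = i}. 1 / B (card e))"
      unfolding degree_i_def edges_of_size_def by (simp add: conj_ac)
    also have "\<dots> \<le> g v"
      unfolding g_def using B(2) assms(2) by (intro sum_mono2) auto
    finally show ?thesis by simp
  qed
  hence "real (card High) \<le> (\<Sum>v\<in>High. g v)"
    using sum_mono[of High "\<lambda>_. 1" g] by simp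
  also have "\<dots> \<le> (\<Sum>v\<in>W. g v)"
    using assms(1) g_nonneg by (intro sum_mono2) (auto simp: High_def)
  also have "\<dots> = (\<Sum>e\<in>F. real (card e) / B (card e))"
    using sum_card_mult_eq_sum_incident[OF assms(1-3), of "\<lambda>e. 1 / B (card e)"] by (simp add: g_def)
  finally show ?thesis
    unfolding High_def .
qed

lemma degree_i_induced_mono:
  assumes "finite W" "U \<subseteq> W"
  shows "degree_i (induced_edges E U) i v \<le> degree_i (induced_edges E W) i v"
  unfolding degree_i_def edges_of_size_def
  using assms finite_induced_edges[OF assms(1), of E]
  by (intro card_mono) (auto simp: induced_edges_def)

lemma edge_potential_hypergraph:
  assumes H: "hypergraph_2k k V E"
  shows "edge_potential \<phi> E V = (\<Sum>i=2..k. real (card (edges_of_size E i)) * (\<phi> i / real (card V) ^ i))"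
proof -
  have V: "finite V" "\<forall>e\<in>E. e \<subseteq> V \<and> card e \<in> {2..k}"
    using H unfolding hypergraph_2k_def by auto
  have E: "finite E" "induced_edges E V = E"
    using V finite_subset[of E "Pow V"] unfolding induced_edges_def by auto
  have "edge_potential \<phi> E V = (\<Sum>i=2..k. \<Sum>e\<in>{e\<in>E. card e = i}. \<phi> (card e) / real (card V) ^ card e)"
    unfolding edge_potential_def E(2) by (rule sum.group[symmetric]) (use E V in auto)
  also have "\<dots> = (\<Sum>i=2..k. real (card (edges_of_size E i)) * (\<phi> i / real (card V) ^ i))"
    by (simp add: edges_of_size_def)
  finally show ?thesis .
qed

lemma exists_induced_subhypergraph_bounded_degrees:
  fixes B :: "nat \<Rightarrow> real"
  assumes H: "hypergraph_2k k V E" and m: "1 \<le> m" "m \<le> card V" and B: "\<forall>i\<in>{2..k}. B i > 0"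
  shows "\<exists>Vs\<subseteq>V. real m - (\<Sum>i=2..k. real i * real (card (edges_of_size E i))
                                      * (real m / real (card V)) ^ i / B i) \<le> real (card Vs)
    \<and> card Vs \<le> m \<and> (\<forall>v\<in>Vs. \<forall>i\<in>{2..k}. real (degree_i (induced_edges E Vs) i v) \<le> B i)"
proof -
  have V: "finite V" "\<forall>e\<in>E. e \<subseteq> V \<and> card e \<in> {2..k}"
    using H unfolding hypergraph_2k_def by auto
  define \<phi> where "\<phi> j = real j * real m ^ j / B j" for j
  have \<phi>: "\<forall>e\<in>E. \<phi> (card e) \<ge> 0"
    using V B unfolding \<phi>_def by (auto intro!: divide_nonneg_pos)
  obtain W where W: "W \<subseteq> V" "card W = m" "edge_potential \<phi> E W \<le> edge_potential \<phi> E V"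
    using edge_potential_subset_le[OF V(1) m \<phi>] by blast
  have finW: "finite W"
    using W V finite_subset by blast
  define F where "F = induced_edges E W"
  define Bad where "Bad = {v\<in>W. \<exists>i\<in>{2..k}. B i < real (degree_i F i v)}"
  have F: "finite F" "\<forall>e\<in>F. e \<subseteq> W" "\<forall>e\<in>F. B (card e) \<ge> 0"
    using finite_induced_edges[OF finW] V B unfolding F_def induced_edges_def
    by (auto simp: less_imp_le)
  have "edge_potential \<phi> E W = (\<Sum>e\<in>F. real (card e) / B (card e))"
    unfolding edge_potential_def F_def W(2) \<phi>_def using m by simp
  hence "real (card Bad) \<le> edge_potential \<phi> E V"
    using card_high_degree_le_sum[OF finW F(1,2) B F(3)] W(3) unfolding Bad_def by linarith
  also have "\<dots> = (\<Sum>i=2..k. real i * real (card (edges_of_size E i)) * (real m / real (card V)) ^ i / B i)"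
    unfolding edge_potential_hypergraph[OF H] \<phi>_def by (simp add: power_divide mult_ac)
  finally have card_Bad: "real (card Bad) \<le> \<dots>" .
  have "card (W - Bad) = m - card Bad" "card Bad \<le> m"
    using finW W(2) card_mono[OF finW] by (auto simp: Bad_def card_Diff_subset finite_subset)
  moreover have "real (degree_i (induced_edges E (W - Bad)) i v) \<le> B i"
    if "v \<in> W - Bad" "i \<in> {2..k}" for v i
    using that degree_i_induced_mono[OF finW Diff_subset[of W Bad], of E i v] unfolding Bad_def F_def by force
  ultimately show ?thesis
    using W(1) card_Bad by (intro exI[of _ "W - Bad"]) (auto simp: of_nat_diff)
qed

lemma ten_powr_neg_three_mult_powr:
  fixes L a :: real
  assumes "L \<ge> 0"
  shows "10 powr (- 3 * a) * L powr a = (0.001 * L) powr a"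
proof -
  have "(10::real) powr (- 3 * a) = (10 powr (-3)) powr a"
    by (simp add: powr_powr)
  also have "(10::real) powr (-3) = 0.001"
    by (simp add: powr_minus powr_numeral)
  finally show ?thesis
    using assms by (simp add: powr_mult[symmetric])
qed

lemma degree_budget_term_le:
  fixes x c C K a T s :: real and i m N :: nat
  assumes T: "T > 1" and s: "s = 0.001 * ln T" and N: "N > 0" and m: "real m \<le> real N / exp s"
    and C: "C > 0" and c: "c < K * C * 10 powr (- 3 * a)"
    and x: "0 \<le> x" "x \<le> c * T ^ (i - 1) * ln T powr a" and i: "i \<ge> 1"
  shows "real N * x * (real m / real N) ^ i / (C * s powr a * (T / exp s) ^ (i - 1)) \<le> K * (real N / exp s)"
proof -
  define p where "p = 1 / exp s"
  have pos: "s > 0" "p > 0"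
    using T unfolding s p_def by auto
  have "c * ln T powr a \<le> K * C * 10 powr (- 3 * a) * ln T powr a"
    using c by (intro mult_right_mono) auto
  also have "\<dots> = K * C * s powr a"
    using ten_powr_neg_three_mult_powr[of "ln T" a] T unfolding s by (simp add: mult.assoc)
  finally have c_le: "c * ln T powr a \<le> K * C * s powr a" .
  have "x * (real m / real N) ^ i \<le> (c * T ^ (i - 1) * ln T powr a) * p ^ i"
    using x m N unfolding p_def by (intro mult_mono power_mono) (auto simp: field_simps)
  also have "\<dots> = (c * ln T powr a) * (T ^ (i - 1) * p ^ (i - 1) * p)"
    using i by (simp add: power_eq_if[of p i] split: if_splits)
  also have "\<dots> \<le> (K * C * s powr a) * (T ^ (i - 1) * p ^ (i - 1) * p)"
    using c_le T pos by (intro mult_right_mono) auto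
  finally have "x * (real m / real N) ^ i \<le> K * p * (C * s powr a * (T * p) ^ (i - 1))"
    by (simp add: power_mult_distrib mult_ac)
  hence "real N * x * (real m / real N) ^ i \<le> K * (real N * p) * (C * s powr a * (T * p) ^ (i - 1))"
    using N by (simp add: mult_left_mono mult.assoc mult.left_commute)
  moreover have "C * s powr a * (T * p) ^ (i - 1) > 0"
    using C T pos by simp
  ultimately show ?thesis
    unfolding p_def by (simp add: pos_divide_le_eq)
qed

lemma pred_div_sixteen_square_le: "real (k - 1) / (16 * real k ^ 2) \<le> 1 / 32"
proof (cases "k = 0")
  case False
  have "0 \<le> (real k - 1) ^ 2"
    by simp
  hence "2 * real (k - 1) \<le> real k ^ 2"
    using False by (simp add: power2_diff of_nat_diff)
  thus ?thesis
    using False by (simp add: field_simps)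
qed simp

lemma degree_budget_sum_le:
  fixes x c C a :: "nat \<Rightarrow> real" and T s :: real and k m N :: nat
  assumes "T > 1" "s = 0.001 * ln T" "N > 0" "real m \<le> real N / exp s"
    and "\<forall>i\<in>{2..k}. C i > 0 \<and> c i < 1 / (16 * real k ^ 2) * C i * 10 powr (- 3 * a i)
      \<and> 0 \<le> x i \<and> x i \<le> c i * T ^ (i - 1) * ln T powr a i"
  shows "(\<Sum>i=2..k. real N * x i * (real m / real N) ^ i / (C i * s powr a i * (T / exp s) ^ (i - 1)))
    \<le> 1 / 32 * (real N / exp s)"
proof -
  have "(\<Sum>i=2..k. real N * x i * (real m / real N) ^ i / (C i * s powr a i * (T / exp s) ^ (i - 1)))
      \<le> (\<Sum>i=2..k. 1 / (16 * real k ^ 2) * (real N / exp s))"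
    using assms by (intro sum_mono degree_budget_term_le) auto
  also have "\<dots> = real (k - 1) / (16 * real k ^ 2) * (real N / exp s)"
    by simp
  also have "\<dots> \<le> 1 / 32 * (real N / exp s)"
    using pred_div_sixteen_square_le by (intro mult_right_mono) auto
  finally show ?thesis .
qed

lemma exists_large_induced_subhypergraph_bounded_degrees:
  fixes c :: "nat \<Rightarrow> real" and V :: "'a set"
  assumes c: "\<forall>i\<in>{2..k}. 0 < c i \<and> c i < 1 / (16 * real k ^ 2) * real ((k - 1) choose (i - 1))
                 * 10 powr (- 3 * (real (k - i) / real (k - 1)))"
    and T: "T \<ge> 2" and s: "s = 0.001 * ln T" and N: "nat \<lceil>5 * exp s\<rceil> \<le> N"
    and H: "hypergraph_2k k V E" and card_V: "card V = N"
    and avg: "\<forall>i\<in>{2..k}. real i * real (card (edges_of_size E i)) / real N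
      \<le> c i * T ^ (i - 1) * ln T powr (real (k - i) / real (k - 1))"
  shows "\<exists>Vs\<subseteq>V. 3 / 4 * (real N / exp s) \<le> real (card Vs) \<and> real (card Vs) \<le> real N / exp s
    \<and> (\<forall>v\<in>Vs. \<forall>i\<in>{2..k}. real (degree_i (induced_edges E Vs) i v)
          \<le> real ((k - 1) choose (i - 1)) * s powr (real (k - i) / real (k - 1)) * (T / exp s) ^ (i - 1))"
proof -
  define P where "P = real N / exp s"
  define m where "m = nat \<lfloor>P\<rfloor>"
  define B where "B i = real ((k - 1) choose (i - 1)) * s powr (real (k - i) / real (k - 1))
    * (T / exp s) ^ (i - 1)" for i
  have "s > 0"
    unfolding s using T by simp
  hence "real N * 1 \<le> real N * exp s"
    by (intro mult_left_mono) auto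
  moreover have "5 * exp s \<le> real N"
    using order.trans[OF real_nat_ceiling_ge of_nat_mono[OF N]] .
  \<comment> \<open>\<open>P \<ge> 5\<close> absorbs the rounding in \<open>m = \<lfloor>P\<rfloor>\<close>: \<open>P - 1 - P/32 \<ge> 3P/4\<close>.\<close>
  ultimately have P: "5 \<le> P" "P \<le> real N"
    unfolding P_def by (simp_all add: field_simps)
  have m: "P - 1 < real m" "real m \<le> P" "1 \<le> m" "m \<le> card V"
    using P card_V unfolding m_def by linarith+
  have B_pos: "\<forall>i\<in>{2..k}. B i > 0"
    using T \<open>s > 0\<close> unfolding B_def by auto
  obtain Vs where Vs: "Vs \<subseteq> V" "card Vs \<le> m"
      "real m - (\<Sum>i=2..k. real i * real (card (edges_of_size E i)) * (real m / real N) ^ i / B i)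
        \<le> real (card Vs)"
      "\<forall>v\<in>Vs. \<forall>i\<in>{2..k}. real (degree_i (induced_edges E Vs) i v) \<le> B i"
    using exists_induced_subhypergraph_bounded_degrees[OF H m(3,4) B_pos, unfolded card_V] by blast
  have budget: "\<forall>i\<in>{2..k}. real ((k - 1) choose (i - 1)) > 0
      \<and> c i < 1 / (16 * real k ^ 2) * real ((k - 1) choose (i - 1))
                 * 10 powr (- 3 * (real (k - i) / real (k - 1)))
      \<and> 0 \<le> real i * real (card (edges_of_size E i)) / real N
      \<and> real i * real (card (edges_of_size E i)) / real N
          \<le> c i * T ^ (i - 1) * ln T powr (real (k - i) / real (k - 1))"
    using c avg by auto
  have "T > 1" "N > 0"
    using T P by auto
  from degree_budget_sum_le[OF this(1) s this(2) m(2)[unfolded P_def] budget]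
  have "(\<Sum>i=2..k. real N * (real i * real (card (edges_of_size E i)) / real N)
      * (real m / real N) ^ i / B i) \<le> 1 / 32 * P"
    unfolding P_def B_def .
  moreover have "real N * (real i * real (card (edges_of_size E i)) / real N)
      = real i * real (card (edges_of_size E i))" for i
    using P by simp
  ultimately have "real (card Vs) \<ge> real m - 1 / 32 * P"
    using Vs(3) by simp
  thus ?thesis
    using Vs(1,2,4) m(1,2) P(1) unfolding P_def B_def by (intro exI[of _ Vs]) auto
qed

theorem mainTheorem3:
  fixes k :: nat and c :: "nat \<Rightarrow> real"
  assumes "k \<ge> 2"
    and "\<forall>i\<in>{2..k}. 0 < c i \<and>
           c i < 1 / (16 * real k ^ 2) * real ((k - 1) choose (i - 1))
                 * 10 powr (- 3 * (real (k - i) / real (k - 1)))"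
  shows "\<exists>T0 :: real. \<exists>N0 :: real \<Rightarrow> nat.
    \<forall>T :: real. \<forall>N :: nat. \<forall>s :: real. \<forall>V :: nat set. \<forall>E :: nat set set.
      T \<ge> T0 \<longrightarrow> N \<ge> N0 T \<longrightarrow> s = 0.001 * ln T \<longrightarrow>
      hypergraph_2k k V E \<longrightarrow> card V = N \<longrightarrow>
      (\<forall>i\<in>{2..k}. real i * real (card (edges_of_size E i)) / real N
          \<le> c i * T ^ (i - 1) * (ln T) powr (real (k - i) / real (k - 1))) \<longrightarrow>
      (\<exists>Vs \<subseteq> V.
         3 / 4 * (real N / exp s) \<le> real (card Vs) \<and> real (card Vs) \<le> real N / exp s \<and>
         (\<forall>v\<in>Vs. \<forall>i\<in>{2..k}.
            real (degree_i (induced_edges E Vs) i v)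
              \<le> real ((k - 1) choose (i - 1)) * s powr (real (k - i) / real (k - 1))
                 * (T / exp s) ^ (i - 1)))"
  by (intro exI[of _ 2] exI[of _ "\<lambda>T. nat \<lceil>5 * exp (0.001 * ln T)\<rceil>"] allI impI
      exists_large_induced_subhypergraph_bounded_degrees[OF assms(2)]) (simp_all only:)

end
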